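(* Let $k\ge 3$ and let $V$ be a finite subset of $\mathbb R$ that is optimal for $k$-term arithmetic progressions. Let $(V_1<V_2<\cdots<V_{k-1})$ be a $\le$-orderly, balanced $(k-1)$-decomposition of $V$. Then both $\bigcup_{j=1}^{k-2}V_j$ and $\bigcup_{j=2}^{k-1}V_j$ are optimal for $(k-1)$-term arithmetic progressions.
   Context: A $k$-term arithmetic progression is a set $\{a,a+d,\dots,a+(k-1)d\}\subseteq\mathbb R$ with $d>0$; $S_{\mathcal A_k}(V)$ is the number of them contained in $V$. An $m$-set $V$ is optimal for $k$-term arithmetic progressions if $S_{\mathcal A_k}(V)$ equals the maximum of $S_{\mathcal A_k}(W)$ over all $m$-subsets $W\subseteq\mathbb R$, namely $(m-r)(m+r-k+1)/(2k-2)$ with $r$ the remainder of $m$ modulo $k-1$. For $A,B\subseteq\mathbb R$, $A<B$ means $a<b$ for all $a\in A$, $b\in B$. A $\le$-orderly $\ell$-decomposition of $V$ is a family $(V_1,\dots,V_\ell)$ of pairwise disjoint, possibly empty subsets with union $V$ such that $V_1<V_2<\cdots<V_\ell$; it is balanced if each $V_i$ has $\lfloor |V|/\ell\rfloor$ or $\lceil |V|/\ell\rceil$ elements. *)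

theory Defs
  imports "HOL-Analysis.Analysis"
begin

definition arith_prog :: "nat \<Rightarrow> real \<Rightarrow> real \<Rightarrow> real set" where
  "arith_prog k a d = {a + real i * d | i. i < k}"

definition S_AP :: "nat \<Rightarrow> real set \<Rightarrow> nat" where
  "S_AP k V = card {P. \<exists>a d. d > 0 \<and> P = arith_prog k a d \<and> P \<subseteq> V}"

definition optimal_AP :: "nat \<Rightarrow> real set \<Rightarrow> bool" where
  "optimal_AP k V \<longleftrightarrow> finite V \<and>
     (\<forall>W. finite W \<and> card W = card V \<longrightarrow> S_AP k W \<le> S_AP k V)"

definition set_less :: "real set \<Rightarrow> real set \<Rightarrow> bool" where
  "set_less A B \<longleftrightarrow> (\<forall>a\<in>A. \<forall>b\<in>B. a < b)"

definition orderly_decomp :: "nat \<Rightarrow> (nat \<Rightarrow> real set) \<Rightarrow> real set \<Rightarrow> bool" where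
  "orderly_decomp l Vs X \<longleftrightarrow>
     (\<forall>i\<in>{1..l}. \<forall>j\<in>{1..l}. i \<noteq> j \<longrightarrow> Vs i \<inter> Vs j = {}) \<and>
     (\<Union>i\<in>{1..l}. Vs i) = X \<and>
     (\<forall>i\<in>{1..l}. \<forall>j\<in>{1..l}. i < j \<longrightarrow> set_less (Vs i) (Vs j))"

definition balanced_decomp :: "nat \<Rightarrow> (nat \<Rightarrow> real set) \<Rightarrow> real set \<Rightarrow> bool" where
  "balanced_decomp l Vs X \<longleftrightarrow>
     (\<forall>i\<in>{1..l}. card (Vs i) = card X div l \<or> card (Vs i) = (card X + l - 1) div l)"

end

theory Submission
  imports Defs
begin

text \<open>Write M_k(m) = \<Sum>_{j<m} \<lfloor>j/(k-1)\<rfloor>. If V = W \<union> U with W < U, a k-term progression in V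
  whose second-to-last term lies in W has its first k-1 terms in W, while one whose second-to-last
  term lies in U is determined by its last two terms, both in U. Hence
  S_k(V) \<le> S_{k-1}(W) + (|U| choose 2), and symmetrically, using the first two terms, when U < W.
  Splitting off a top block of size \<lfloor>|V|/(k-1)\<rfloor> and inducting on k gives S_k(V) \<le> M_k(|V|),
  with equality for an interval, and M_k(m) = M_{k-1}(m - t) + (t choose 2) for both balanced
  block sizes t. So if V is optimal and U is an extreme block of a balanced decomposition, then
  S_{k-1}(W) \<ge> M_{k-1}(|W|), i.e. W is optimal.\<close>

lemma arith_prog_memI: "i < k \<Longrightarrow> a + real i * d \<in> arith_prog k a d"
  by (auto simp: arith_prog_def)

lemma arith_prog_memE:
  assumes "x \<in> arith_prog k a d"
  obtains i where "i < k" "x = a + real i * d"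
  using assms by (auto simp: arith_prog_def)

lemma arith_prog_shift_subset:
  assumes "i + j \<le> k" shows "arith_prog j (a + real i * d) d \<subseteq> arith_prog k a d"
proof
  fix x assume "x \<in> arith_prog j (a + real i * d) d"
  then obtain n where n: "n < j" "x = a + real i * d + real n * d"
    by (rule arith_prog_memE)
  then have "x = a + real (i + n) * d"
    by (simp add: distrib_right)
  then show "x \<in> arith_prog k a d"
    using assms n(1) arith_prog_memI[of "i + n" k a d] by simp
qed

lemma arith_prog_ge_start: "x \<in> arith_prog k a d \<Longrightarrow> d > 0 \<Longrightarrow> a \<le> x"
  by (erule arith_prog_memE) auto

lemma arith_prog_le_last: "x \<in> arith_prog k a d \<Longrightarrow> d > 0 \<Longrightarrow> x \<le> a + real (k - 1) * d"
  by (erule arith_prog_memE) (auto intro!: mult_right_mono)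

lemma arith_prog_inj:
  assumes "2 \<le> k" "d > 0" "d' > 0" and eq: "arith_prog k a d = arith_prog k a' d'"
  shows "a = a' \<and> d = d'"
proof -
  have "a \<in> arith_prog k a' d'" "a' \<in> arith_prog k a d"
    using eq arith_prog_memI[of 0 k a d] arith_prog_memI[of 0 k a' d'] assms(1) by auto
  then have a: "a = a'"
    using arith_prog_ge_start assms(2,3) by (meson order_antisym)
  have step_le: "\<delta> \<le> \<delta>'" if pos: "\<delta> > 0" "\<delta>' > 0" and mem: "a + \<delta>' \<in> arith_prog k a \<delta>" for \<delta> \<delta>'
  proof -
    obtain i where "a + \<delta>' = a + real i * \<delta>" using mem by (rule arith_prog_memE)
    then have i: "\<delta>' = real i * \<delta>" by simp
    with pos(2) have "i \<ge> 1" by (cases i) auto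
    then show ?thesis using i pos(1) by simp
  qed
  have "a + d \<in> arith_prog k a d'" "a + d' \<in> arith_prog k a d"
    using eq a arith_prog_memI[of 1 k a d] arith_prog_memI[of 1 k a' d'] assms(1) by auto
  then have "d = d'" using step_le assms(2,3) by (meson order_antisym)
  with a show ?thesis ..
qed

definition ap_params :: "nat \<Rightarrow> real set \<Rightarrow> (real \<times> real) set" where
  "ap_params k V = {(a, d). d > 0 \<and> arith_prog k a d \<subseteq> V}"

lemma S_AP_eq_card_ap_params:
  assumes "2 \<le> k" shows "S_AP k V = card (ap_params k V)"
proof -
  have "{P. \<exists>a d. d > 0 \<and> P = arith_prog k a d \<and> P \<subseteq> V} = (\<lambda>(a, d). arith_prog k a d) ` ap_params k V"
    by (auto simp: ap_params_def image_def)
  moreover have "inj_on (\<lambda>(a, d). arith_prog k a d) (ap_params k V)"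
    using arith_prog_inj[OF assms] by (auto simp: inj_on_def ap_params_def)
  ultimately show ?thesis
    unfolding S_AP_def by (simp add: card_image)
qed

lemma ap_params_mono: "V \<subseteq> V' \<Longrightarrow> ap_params k V \<subseteq> ap_params k V'"
  by (auto simp: ap_params_def)

lemma finite_ap_params:
  assumes "finite V" "2 \<le> k" shows "finite (ap_params k V)"
proof -
  have "ap_params k V \<subseteq> (\<lambda>(x, y). (x, y - x)) ` (V \<times> V)"
  proof
    fix p assume "p \<in> ap_params k V"
    then obtain a d where p: "p = (a, d)" "d > 0" "arith_prog k a d \<subseteq> V"
      by (auto simp: ap_params_def)
    have "a \<in> V" "a + d \<in> V"
      using p arith_prog_memI[of 0 k a d] arith_prog_memI[of 1 k a d] assms by auto
    then show "p \<in> (\<lambda>(x, y). (x, y - x)) ` (V \<times> V)"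
      using p by (auto simp: image_def intro!: bexI[of _ "a + d"])
  qed
  then show ?thesis using assms by (meson finite_SigmaI finite_imageI finite_subset)
qed

lemma card_ap_params_two_le:
  assumes "finite U" shows "card (ap_params 2 U) \<le> card U choose 2"
proof -
  let ?pair = "\<lambda>(a::real, d::real). {a, a + d}"
  have "inj_on ?pair (ap_params 2 U)"
    by (auto simp: inj_on_def ap_params_def doubleton_eq_iff)
  moreover have "?pair ` ap_params 2 U \<subseteq> {S. S \<subseteq> U \<and> card S = 2}"
    using arith_prog_memI[of 0 2] arith_prog_memI[of 1 2] by (fastforce simp: ap_params_def)
  ultimately have "card (ap_params 2 U) \<le> card {S. S \<subseteq> U \<and> card S = 2}"
    using assms by (intro card_inj_on_le) auto
  then show ?thesis using n_subsets[OF assms] by simp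
qed

lemma set_less_disjoint: "set_less A B \<Longrightarrow> A \<inter> B = {}"
  by (force simp: set_less_def)

lemma arith_prog_prefix_subset:
  assumes less: "set_less L R" and V: "arith_prog k a d \<subseteq> L \<union> R" and "d > 0" "i < k"
    and mem: "a + real i * d \<in> L"
  shows "arith_prog (Suc i) a d \<subseteq> L"
proof
  fix x assume x: "x \<in> arith_prog (Suc i) a d"
  then have "x \<in> L \<union> R"
    using V arith_prog_shift_subset[of 0 "Suc i" k a d] \<open>i < k\<close> by auto
  moreover have "x \<le> a + real i * d"
    using arith_prog_le_last[OF x \<open>d > 0\<close>] by simp
  ultimately show "x \<in> L"
    using less mem by (force simp: set_less_def)
qed

lemma arith_prog_suffix_subset:
  assumes less: "set_less L R" and V: "arith_prog k a d \<subseteq> L \<union> R" and "d > 0" "i < k"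
    and mem: "a + real i * d \<in> R"
  shows "arith_prog (k - i) (a + real i * d) d \<subseteq> R"
proof
  fix x assume x: "x \<in> arith_prog (k - i) (a + real i * d) d"
  then have "x \<in> L \<union> R"
    using V arith_prog_shift_subset[of i "k - i" k a d] \<open>i < k\<close> by auto
  moreover have "a + real i * d \<le> x"
    using arith_prog_ge_start[OF x \<open>d > 0\<close>] .
  ultimately show "x \<in> R"
    using less mem by (force simp: set_less_def)
qed

lemma card_le_add_by_inj_on:
  assumes "P \<subseteq> A \<union> B" "inj_on f A" "f ` A \<subseteq> Q" "inj_on g B" "g ` B \<subseteq> R"
    and "finite Q" "finite R"
  shows "card P \<le> card Q + card R"
proof -
  have "finite A" "finite B"
    using assms inj_on_finite by blast+
  then have "card P \<le> card A + card B"
    using assms(1) by (meson card_Un_le card_mono finite_UnI le_trans)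
  also have "\<dots> \<le> card Q + card R"
    using assms(2-) by (intro add_mono card_inj_on_le)
  finally show ?thesis .
qed

text \<open>Sort the progressions by the side of the cut containing their second-to-last term.\<close>
lemma card_ap_params_split_right:
  assumes k: "3 \<le> k" and fin: "finite W" "finite U" and less: "set_less W U"
  shows "card (ap_params k (W \<union> U)) \<le> card (ap_params (k - 1) W) + card (ap_params 2 U)"
proof (rule card_le_add_by_inj_on)
  let ?penult = "\<lambda>(a, d). a + real (k - 2) * d"
  have "Suc (k - 2) = k - 1"
    using k by simp
  show "ap_params k (W \<union> U) \<subseteq> {p \<in> ap_params k (W \<union> U). ?penult p \<in> W} \<union>
      {p \<in> ap_params k (W \<union> U). ?penult p \<in> U}"
    using k arith_prog_memI[of "k - 2" k] by (auto simp: ap_params_def)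
  show "id ` {p \<in> ap_params k (W \<union> U). ?penult p \<in> W} \<subseteq> ap_params (k - 1) W"
    using k arith_prog_prefix_subset[OF less, of k _ _ "k - 2", unfolded \<open>Suc (k - 2) = k - 1\<close>]
    by (auto simp: ap_params_def)
  show "(\<lambda>(a, d). (?penult (a, d), d)) ` {p \<in> ap_params k (W \<union> U). ?penult p \<in> U} \<subseteq> ap_params 2 U"
    using k arith_prog_suffix_subset[OF less, of k _ _ "k - 2"] by (auto simp: ap_params_def)
qed (use k fin in \<open>auto simp: inj_on_def intro: finite_ap_params\<close>)

text \<open>Mirror image: sort by the side containing the second term.\<close>
lemma card_ap_params_split_left:
  assumes k: "3 \<le> k" and fin: "finite W" "finite U" and less: "set_less U W"
  shows "card (ap_params k (U \<union> W)) \<le> card (ap_params (k - 1) W) + card (ap_params 2 U)"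
proof (rule card_le_add_by_inj_on)
  let ?second = "\<lambda>(a, d). a + real 1 * d"
  show "ap_params k (U \<union> W) \<subseteq> {p \<in> ap_params k (U \<union> W). ?second p \<in> W} \<union>
      {p \<in> ap_params k (U \<union> W). ?second p \<in> U}"
    using k arith_prog_memI[of 1 k] by (auto simp: ap_params_def)
  show "(\<lambda>(a, d). (?second (a, d), d)) ` {p \<in> ap_params k (U \<union> W). ?second p \<in> W} \<subseteq> ap_params (k - 1) W"
    using k arith_prog_suffix_subset[OF less, of k _ _ 1] by (auto simp: ap_params_def)
  show "id ` {p \<in> ap_params k (U \<union> W). ?second p \<in> U} \<subseteq> ap_params 2 U"
    using k arith_prog_prefix_subset[OF less, of k _ _ 1] by (auto simp: ap_params_def numeral_2_eq_2)
qed (use k fin in \<open>auto simp: inj_on_def intro: finite_ap_params\<close>)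

text \<open>This is the paper's maximum (m - r)(m + r - k + 1)/(2k - 2), cf. \<open>max_AP_closed_form\<close>.\<close>
definition max_AP :: "nat \<Rightarrow> nat \<Rightarrow> nat" where
  "max_AP k m = (\<Sum>j<m. j div (k - 1))"

lemma max_AP_Suc: "max_AP k (Suc m) = max_AP k m + m div (k - 1)"
  by (simp add: max_AP_def)

lemma max_AP_closed_form:
  assumes "r < k - 1"
  shows "2 * max_AP k (q * (k - 1) + r) + (k - 1) * q = (k - 1) * q * q + 2 * q * r"
proof -
  define l where "l = k - 1"
  have step: "max_AP k (Suc m) = max_AP k m + m div l" for m
    by (simp add: max_AP_Suc l_def)
  have "2 * max_AP k m + l * (m div l) = l * (m div l) * (m div l) + 2 * (m div l) * (m mod l)" for m
  proof (induction m)
    case 0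
    then show ?case by (simp add: max_AP_def)
  next
    case (Suc m)
    show ?case
    proof (cases "Suc (m mod l) < l")
      case True
      then have "Suc m div l = m div l" "Suc m mod l = Suc (m mod l)"
        by (auto simp: div_Suc mod_Suc)
      then show ?thesis
        using Suc.IH by (simp add: step algebra_simps)
    next
      case False
      define q r where "q = m div l" and "r = m mod l"
      have l: "l = Suc r"
        using False mod_less_divisor[of l m] assms unfolding r_def l_def by linarith
      have "Suc m div l = Suc q" "Suc m mod l = 0"
        using l by (auto simp: q_def r_def div_Suc mod_Suc)
      moreover have "2 * max_AP k m + Suc r * q = Suc r * q * q + 2 * q * r"
        using Suc.IH unfolding q_def[symmetric] r_def[symmetric] by (simp add: l)
      ultimately show ?thesis
        unfolding step q_def[symmetric] by (simp add: l algebra_simps)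
    qed
  qed
  from this[of "q * l + r"] assms show ?thesis
    by (simp add: l_def)
qed

lemma twice_choose_two: "2 * (t choose 2) + t = t * t"
  by (induction t) (auto simp: numeral_2_eq_2)

lemma max_AP_split:
  assumes k: "3 \<le> k" and t: "t = m div (k - 1) \<or> t = (m + (k - 1) - 1) div (k - 1)"
  shows "max_AP k m = max_AP (k - 1) (m - t) + (t choose 2)"
proof -
  define L where "L = k - 2"
  have kL: "k = Suc (Suc L)" and L: "L \<ge> 1"
    using k by (simp_all add: L_def)
  define q r where "q = m div Suc L" and "r = m mod Suc L"
  have m: "m = q * Suc L + r"
    unfolding q_def r_def by (rule div_mult_mod_eq[symmetric])
  have r: "r < Suc L"
    by (simp add: r_def)
  have closed_k: "2 * max_AP k m + Suc L * q = Suc L * q * q + 2 * q * r"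
    using max_AP_closed_form[of r k q] r by (simp add: m kL)
  have closed_k1: "2 * max_AP (k - 1) (q' * L + r') + L * q' = L * q' * q' + 2 * q' * r'"
    if "r' < L" for q' r'
    using max_AP_closed_form[of r' "k - 1" q'] that by (simp add: kL)
  have "(m + Suc L - 1) div Suc L = (if r = 0 then q else Suc q)"
    by (rule div_nat_eqI) (use m r in \<open>auto simp: algebra_simps\<close>)
  then have "t = q \<or> (r \<noteq> 0 \<and> t = Suc q)"
    using t by (auto simp: q_def kL split: if_splits)
  then consider "t = q" "r < L" | "t = q" "r = L" | r' where "t = Suc q" "r = Suc r'"
    using r by (cases r) (auto simp: less_Suc_eq)
  then show ?thesis
  proof cases
    case 1
    then have "m - t = q * L + r" using m by simp
    then have "2 * max_AP (k - 1) (m - t) + L * q = L * q * q + 2 * q * r"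
      using closed_k1[OF \<open>r < L\<close>] by simp
    then show ?thesis using closed_k twice_choose_two[of t] 1
      by (simp add: algebra_simps)
  next
    case 2
    then have "m - t = Suc q * L + 0" using m by simp
    then have "2 * max_AP (k - 1) (m - t) + L * Suc q = L * Suc q * Suc q"
      using closed_k1[of 0 "Suc q"] L by simp
    then show ?thesis using closed_k twice_choose_two[of t] 2
      by (simp add: algebra_simps)
  next
    case 3
    then have "m - t = q * L + r'" using m by simp
    then have "2 * max_AP (k - 1) (m - t) + L * q = L * q * q + 2 * q * r'"
      using closed_k1[of r' q] r 3 by simp
    then show ?thesis using closed_k twice_choose_two[of t] 3
      by (simp add: algebra_simps)
  qed
qed

lemma max_AP_two: "max_AP 2 m = m choose 2"
  by (induction m) (auto simp: max_AP_def numeral_2_eq_2)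

lemma set_less_split_card:
  fixes V :: "real set"
  assumes "finite V" "t \<le> card V"
  obtains W U where "V = W \<union> U" "set_less W U" "card W = card V - t" "card U = t"
proof
  define xs where "xs = sorted_list_of_set V"
  define n where "n = card V - t"
  have xs: "sorted_wrt (<) xs" "distinct xs" "set xs = V" "length xs = card V"
    using assms(1) by (simp_all add: xs_def)
  then have "sorted_wrt (<) (take n xs @ drop n xs)"
    by simp
  then show "set_less (set (take n xs)) (set (drop n xs))"
    unfolding sorted_wrt_append set_less_def by blast
  show "V = set (take n xs) \<union> set (drop n xs)"
    using xs(3) by (metis append_take_drop_id set_append)
  show "card (set (take n xs)) = card V - t" "card (set (drop n xs)) = t"
    using xs(2,4) assms(2) by (simp_all add: distinct_card n_def)
qed

lemma S_AP_le_max_AP: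
  assumes "2 \<le> k" "finite V"
  shows "S_AP k V \<le> max_AP k (card V)"
  using assms
proof (induction k arbitrary: V rule: nat_induct_at_least)
  case base
  then show ?case
    using card_ap_params_two_le S_AP_eq_card_ap_params by (simp add: max_AP_two)
next
  case (Suc k)
  define t where "t = card V div k"
  obtain W U where V: "V = W \<union> U" "set_less W U" "card W = card V - t" "card U = t"
    using set_less_split_card[OF Suc.prems, of t] by (auto simp: t_def)
  have fin: "finite W" "finite U"
    using V(1) Suc.prems by auto
  have "S_AP (Suc k) V \<le> S_AP k W + card (ap_params 2 U)"
    using card_ap_params_split_right[of "Suc k" W U] Suc.hyps fin V(1,2)
    by (simp add: S_AP_eq_card_ap_params)
  also have "\<dots> \<le> max_AP k (card W) + (card U choose 2)"
    using Suc.IH[OF fin(1)] card_ap_params_two_le[OF fin(2)] by simp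
  also have "\<dots> = max_AP (Suc k) (card V)"
    using max_AP_split[of "Suc k" t "card V"] Suc.hyps V(3,4) by (simp add: t_def)
  finally show ?case .
qed

lemma arith_prog_ending_subset_interval:
  assumes "l * d \<le> m"
  shows "arith_prog (Suc l) (real m - real l * real d) (real d) \<subseteq> real ` {0..<Suc m}"
proof
  fix x assume "x \<in> arith_prog (Suc l) (real m - real l * real d) (real d)"
  then obtain i where i: "i < Suc l" "x = real m - real l * real d + real i * real d"
    by (rule arith_prog_memE)
  have "(l - i) * d \<le> m"
    using assms by (meson diff_le_self le_trans mult_le_mono1)
  moreover have "real ((l - i) * d) = (real l - real i) * real d"
    using i(1) by (simp add: of_nat_diff)
  ultimately have "x = real (m - (l - i) * d)"
    using i(2) by (simp add: of_nat_diff algebra_simps)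
  then show "x \<in> real ` {0..<Suc m}"
    by auto
qed

lemma max_AP_le_S_AP_interval:
  assumes "2 \<le> k"
  shows "max_AP k m \<le> S_AP k (real ` {0..<m})"
proof (induction m)
  case 0
  then show ?case by (simp add: max_AP_def)
next
  case (Suc m)
  define l where "l = k - 1"
  have k: "k = Suc l"
    using assms by (simp add: l_def)
  let ?I = "real ` {0..<m}" and ?I' = "real ` {0..<Suc m}"
  let ?ending = "\<lambda>d::nat. (real m - real l * real d, real d)"
  define N where "N = ?ending ` {1..m div l}"
  have "card N = m div l"
    unfolding N_def by (subst card_image) (auto simp: inj_on_def)
  have N: "N \<subseteq> ap_params k ?I'"
  proof
    fix p assume "p \<in> N"
    then obtain d where d: "d \<in> {1..m div l}" "p = ?ending d"
      unfolding N_def by blast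
    then have "l * d \<le> m"
      by (meson atLeastAtMost_iff le_trans mult_le_mono2 times_div_less_eq_dividend)
    then have "arith_prog k (real m - real l * real d) (real d) \<subseteq> ?I'"
      using arith_prog_ending_subset_interval k by blast
    then show "p \<in> ap_params k ?I'"
      using d by (simp add: ap_params_def)
  qed
  have "ap_params k ?I \<subseteq> ap_params k ?I'"
    by (rule ap_params_mono) auto
  moreover have "ap_params k ?I \<inter> N = {}"
  proof -
    have "real m \<in> arith_prog k (real m - real l * real d) (real d)" for d :: nat
      using arith_prog_memI[of l k "real m - real l * real d" "real d"] k by simp
    moreover have "real m \<notin> ?I"
      by auto
    ultimately have "?ending d \<notin> ap_params k ?I" for d
      unfolding ap_params_def by blast
    then show ?thesis
      unfolding N_def by blast
  qed
  moreover have "finite (ap_params k ?I')"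
    using finite_ap_params assms by simp
  ultimately have "card (ap_params k ?I) + card N \<le> card (ap_params k ?I')"
    using N by (metis card_Un_disjoint card_mono finite_subset Un_least)
  then show ?case
    using Suc.IH \<open>card N = m div l\<close> assms
    by (simp add: max_AP_Suc l_def S_AP_eq_card_ap_params)
qed

lemma optimal_AP_iff_max_AP:
  assumes "2 \<le> k" "finite V"
  shows "optimal_AP k V \<longleftrightarrow> S_AP k V = max_AP k (card V)"
proof
  assume "optimal_AP k V"
  moreover have "card (real ` {0..<card V}) = card V"
    by (simp add: card_image)
  ultimately have "S_AP k (real ` {0..<card V}) \<le> S_AP k V"
    unfolding optimal_AP_def by blast
  then show "S_AP k V = max_AP k (card V)"
    using max_AP_le_S_AP_interval[OF assms(1)] S_AP_le_max_AP[OF assms] by (meson le_antisym le_trans)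
next
  assume "S_AP k V = max_AP k (card V)"
  then show "optimal_AP k V"
    using S_AP_le_max_AP[OF assms(1)] assms(2) unfolding optimal_AP_def by metis
qed

lemma S_AP_split_le:
  assumes "3 \<le> k" "finite W" "finite U" "set_less W U \<or> set_less U W"
  shows "S_AP k (W \<union> U) \<le> S_AP (k - 1) W + (card U choose 2)"
proof -
  have "card (ap_params k (W \<union> U)) \<le> card (ap_params (k - 1) W) + card (ap_params 2 U)"
    using assms card_ap_params_split_right card_ap_params_split_left by (metis Un_commute)
  then show ?thesis
    using assms(1) card_ap_params_two_le[OF assms(3)] by (simp add: S_AP_eq_card_ap_params)
qed

lemma optimal_AP_remove_balanced_block:
  assumes k: "3 \<le> k" and opt: "optimal_AP k V" and V: "V = W \<union> U"
    and less: "set_less W U \<or> set_less U W"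
    and balanced: "card U = card V div (k - 1) \<or> card U = (card V + (k - 1) - 1) div (k - 1)"
  shows "optimal_AP (k - 1) W"
proof -
  have fin: "finite V" "finite W" "finite U"
    using opt V by (auto simp: optimal_AP_def)
  have "W \<inter> U = {}"
    using less set_less_disjoint by blast
  then have card_W: "card W = card V - card U"
    using V fin by (simp add: card_Un_disjoint)
  have "max_AP (k - 1) (card W) + (card U choose 2) = max_AP k (card V)"
    using max_AP_split[OF k balanced] card_W by simp
  also have "\<dots> = S_AP k V"
    using optimal_AP_iff_max_AP[of k V] k fin opt by simp
  also have "\<dots> \<le> S_AP (k - 1) W + (card U choose 2)"
    using S_AP_split_le[OF k fin(2,3) less] V by simp
  finally have "max_AP (k - 1) (card W) \<le> S_AP (k - 1) W"
    by simp
  with S_AP_le_max_AP[of "k - 1" W] k fin(2) show ?thesis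
    by (simp add: optimal_AP_iff_max_AP)
qed

lemma orderly_decomp_split:
  assumes "orderly_decomp l Vs X" "p \<le> l"
  shows "X = (\<Union>j\<in>{1..p}. Vs j) \<union> (\<Union>j\<in>{p+1..l}. Vs j)"
    and "set_less (\<Union>j\<in>{1..p}. Vs j) (\<Union>j\<in>{p+1..l}. Vs j)"
proof -
  have "{1..l} = {1..p} \<union> {p+1..l}"
    using assms(2) by auto
  then show "X = (\<Union>j\<in>{1..p}. Vs j) \<union> (\<Union>j\<in>{p+1..l}. Vs j)"
    using assms(1) unfolding orderly_decomp_def by (metis UN_Un)
  have "set_less (Vs i) (Vs j)" if "i \<in> {1..p}" "j \<in> {p+1..l}" for i j
    using assms that unfolding orderly_decomp_def by auto
  then show "set_less (\<Union>j\<in>{1..p}. Vs j) (\<Union>j\<in>{p+1..l}. Vs j)"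
    unfolding set_less_def by blast
qed

theorem mainTheorem10:
  fixes k :: nat and V :: "real set" and Vs :: "nat \<Rightarrow> real set"
  assumes "k \<ge> 3"
    and "finite V"
    and "optimal_AP k V"
    and "orderly_decomp (k - 1) Vs V"
    and "balanced_decomp (k - 1) Vs V"
  shows "optimal_AP (k - 1) (\<Union>j\<in>{1..k-2}. Vs j)
       \<and> optimal_AP (k - 1) (\<Union>j\<in>{2..k-1}. Vs j)"
proof
  have balanced: "card (Vs j) = card V div (k - 1) \<or> card (Vs j) = (card V + (k - 1) - 1) div (k - 1)"
    if "j \<in> {1..k - 1}" for j
    using assms(5) that unfolding balanced_decomp_def by blast
  have "{k - 2 + 1..k - 1} = {k - 1}"
    using assms(1) by auto
  then have "V = (\<Union>j\<in>{1..k-2}. Vs j) \<union> Vs (k - 1)" "set_less (\<Union>j\<in>{1..k-2}. Vs j) (Vs (k - 1))"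
    using orderly_decomp_split[OF assms(4), of "k - 2"] by simp_all
  then show "optimal_AP (k - 1) (\<Union>j\<in>{1..k-2}. Vs j)"
    using optimal_AP_remove_balanced_block[OF assms(1,3)] balanced[of "k - 1"] assms(1) by simp
  have "V = Vs 1 \<union> (\<Union>j\<in>{2..k-1}. Vs j)" "set_less (Vs 1) (\<Union>j\<in>{2..k-1}. Vs j)"
    using orderly_decomp_split[OF assms(4), of 1] assms(1) by (simp_all add: numeral_2_eq_2)
  then show "optimal_AP (k - 1) (\<Union>j\<in>{2..k-1}. Vs j)"
    using optimal_AP_remove_balanced_block[OF assms(1,3)] balanced[of 1] assms(1)
    by (simp add: sup_commute)
qed

end
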